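(* Let $\mathcal{X}$ be a finite set and $\underline{Q}$ a lower transition rate operator on $\mathcal{L}(\mathcal{X})$. Then for all $f\in\mathcal{L}(\mathcal{X})$, $x\in\mathcal{X}$ and $t,s>0$: (1) if $f(x)>\min f$ then $\underline{T}_tf(x)>\min f$; and $\underline{T}_tf(x)>\min f\iff\underline{T}_sf(x)>\min f$; (2) if $f(x)<\max f$ then $\underline{T}_tf(x)<\max f$; and $\underline{T}_tf(x)<\max f\iff\underline{T}_sf(x)<\max f$; (3) if $f(x)>\min f$ then $\overline{T}_tf(x)>\min f$; and $\overline{T}_tf(x)>\min f\iff\overline{T}_sf(x)>\min f$; (4) if $f(x)<\max f$ then $\overline{T}_tf(x)<\max f$; and $\overline{T}_tf(x)<\max f\iff\overline{T}_sf(x)<\max f$.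
   Context: $\mathcal{L}(\mathcal{X})$ is the set of real-valued functions on $\mathcal{X}$ with pointwise operations and order, real constants identified with constant functions, $\mathbb{I}_y$ the indicator of $\{y\}$. A lower transition rate operator is a map $\underline{Q}\colon\mathcal{L}(\mathcal{X})\to\mathcal{L}(\mathcal{X})$ such that for all $f,g$, $\lambda\ge0$, $\mu\in\mathbb{R}$, $x,y\in\mathcal{X}$: $\underline{Q}(\mu)=0$; $\underline{Q}(f+g)\ge\underline{Q}f+\underline{Q}g$; $\underline{Q}(\lambda f)=\lambda\underline{Q}f$; $x\ne y\Rightarrow\underline{Q}(\mathbb{I}_y)(x)\ge0$. For each $f$, $t\mapsto\underline{T}_tf$ is the unique solution on $[0,\infty)$ of $\frac{d}{dt}\underline{T}_tf=\underline{Q}\,\underline{T}_tf$ with $\underline{T}_0f=f$ (existence and uniqueness are known), and $\overline{T}_tf\coloneqq-\underline{T}_t(-f)$. *)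

theory Defs
  imports "HOL-Analysis.Analysis"
begin

definition lower_transition_rate_operator :: "(('x \<Rightarrow> real) \<Rightarrow> ('x \<Rightarrow> real)) \<Rightarrow> bool" where
  "lower_transition_rate_operator Q \<longleftrightarrow>
     (\<forall>\<mu>::real. Q (\<lambda>_. \<mu>) = (\<lambda>_. 0)) \<and>
     (\<forall>f g x. Q (\<lambda>y. f y + g y) x \<ge> Q f x + Q g x) \<and>
     (\<forall>c::real. c \<ge> 0 \<longrightarrow> (\<forall>f. Q (\<lambda>y. c * f y) = (\<lambda>y. c * Q f y))) \<and>
     (\<forall>x y. x \<noteq> y \<longrightarrow> Q (\<lambda>z. if z = y then 1 else 0) x \<ge> 0)"

text \<open>T is the (unique) solution family: for every f, t \<mapsto> T t f solves
  d/dt T_t f = Q (T_t f) on [0,\<infinity>) with T_0 f = f (derivative taken componentwise,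
  which for finite X coincides with the derivative in L(X); one-sided at t = 0).\<close>
definition lower_semigroup_of ::
  "(('x \<Rightarrow> real) \<Rightarrow> ('x \<Rightarrow> real)) \<Rightarrow> (real \<Rightarrow> ('x \<Rightarrow> real) \<Rightarrow> ('x \<Rightarrow> real)) \<Rightarrow> bool" where
  "lower_semigroup_of Q T \<longleftrightarrow>
     (\<forall>f. T 0 f = f \<and>
        (\<forall>t \<ge> 0. \<forall>x. ((\<lambda>s. T s f x) has_real_derivative Q (T t f) x) (at t within {0..})))"

definition upper_of :: "(real \<Rightarrow> ('x \<Rightarrow> real) \<Rightarrow> ('x \<Rightarrow> real)) \<Rightarrow> real \<Rightarrow> ('x \<Rightarrow> real) \<Rightarrow> ('x \<Rightarrow> real)" where
  "upper_of T t f = (\<lambda>x. - T t (\<lambda>y. - f y) x)"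

end

theory Submission
  imports Defs
begin

text \<open>
  For a bound \<open>c \<le> f\<close> the gap \<open>u t = T t f - c\<close> solves \<open>u' = Q u\<close>, by translation
  invariance of \<open>Q\<close>; for \<open>f \<le> c\<close> the gap \<open>c - T t f\<close> solves \<open>u' = Q\<^sup>* u\<close> with the conjugate
  operator \<open>Q\<^sup>* g = - Q (- g)\<close>. Both operators are positively homogeneous, Lipschitz and
  quasimonotone, and for a flow \<open>u' = R u\<close> of such an operator \<open>R\<close> the sign pattern of
  \<open>u t\<close> does not depend on \<open>t > 0\<close>: nonnegativity is preserved (Gronwall applied to the squared negative
  part), a positive coordinate stays positive because \<open>u\<^sub>y' \<ge> R 1\<^sub>y y \<cdot> u\<^sub>y\<close>, and the zero set
  \<open>B\<close> of \<open>u s\<close> is invariant after time \<open>s\<close>: \<open>R\<close> vanishes at \<open>B\<close> on every nonnegative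
  function vanishing on \<open>B\<close>, so \<open>\<Sum>\<^sub>y\<^sub>\<in>\<^sub>B u\<^sub>y\<close> obeys a linear Gronwall inequality starting
  from \<open>0\<close>. The upper semigroup reduces to the lower one via \<open>upper_of T t f = - T t (- f)\<close>.
\<close>

text \<open>\<open>mono_at\<close> is Kamke's quasimonotonicity condition.\<close>

locale quasimonotone =
  fixes R :: "('x::finite \<Rightarrow> real) \<Rightarrow> ('x \<Rightarrow> real)" and K :: real
  assumes mono_at: "(\<And>z. g z \<le> h z) \<Longrightarrow> g y = h y \<Longrightarrow> R g y \<le> R h y"
    and homogeneous: "c \<ge> 0 \<Longrightarrow> R (\<lambda>z. c * g z) y = c * R g y"
    and lipschitz: "\<bar>R g y - R h y\<bar> \<le> K * (\<Sum>z\<in>UNIV. \<bar>g z - h z\<bar>)"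
    and lipschitz_const_nonneg: "K \<ge> 0"
begin

lemma zero: "R (\<lambda>_. 0) y = 0"
  using homogeneous[of 0 "\<lambda>_. 0" y] by simp

lemma nonneg_at:
  assumes "\<And>z. 0 \<le> g z" and "g y = 0"
  shows "0 \<le> R g y"
  using mono_at[of "\<lambda>_. 0" g y] assms zero by simp

lemma diagonal_bound:
  assumes "\<And>z. 0 \<le> g z"
  shows "g y * R (indicator {y}) y \<le> R g y"
proof -
  have "R (\<lambda>z. g y * indicator {y} z) y \<le> R g y"
    by (rule mono_at) (auto simp: indicator_def assms)
  then show ?thesis
    using homogeneous[of "g y" "indicator {y}" y] assms by simp
qed

lemma lower_bound_at_nonpos:
  assumes "g y \<le> 0"
  shows "- K * (\<Sum>z\<in>UNIV. \<bar>min 0 (g z)\<bar>) \<le> R g y"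
proof -
  have "0 \<le> R (\<lambda>z. max 0 (g z)) y"
    by (rule nonneg_at) (use assms in auto)
  moreover have "\<bar>g z - max 0 (g z)\<bar> = \<bar>min 0 (g z)\<bar>" for z
    by (simp add: max_def min_def)
  ultimately show ?thesis
    using lipschitz[of g y "\<lambda>z. max 0 (g z)"] by simp
qed

lemma negative_part_dissipation:
  "(\<Sum>y\<in>UNIV. 2 * min 0 (g y) * R g y) \<le> 2 * K * CARD('x) * (\<Sum>y\<in>UNIV. (min 0 (g y))\<^sup>2)"
proof -
  define N where "N = (\<Sum>z\<in>UNIV. \<bar>min 0 (g z)\<bar>)"
  have each: "2 * min 0 (g y) * R g y \<le> 2 * \<bar>min 0 (g y)\<bar> * (K * N)" for y
  proof (cases "g y \<le> 0")
    case True
    then have "min 0 (g y) * R g y \<le> min 0 (g y) * (- K * N)"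
      unfolding N_def by (intro mult_left_mono_neg lower_bound_at_nonpos) auto
    then show ?thesis using True by (simp add: algebra_simps)
  qed simp
  have "(\<Sum>y\<in>UNIV. 2 * min 0 (g y) * R g y) \<le> (\<Sum>y\<in>UNIV. 2 * \<bar>min 0 (g y)\<bar> * (K * N))"
    by (intro sum_mono each)
  also have "\<dots> = (\<Sum>y\<in>UNIV. 2 * \<bar>min 0 (g y)\<bar>) * (K * N)"
    by (rule sum_distrib_right[symmetric])
  also have "\<dots> = 2 * N * (K * N)"
    by (simp only: N_def sum_distrib_left)
  also have "\<dots> = 2 * K * N\<^sup>2"
    by (simp add: power2_eq_square)
  also have "\<dots> \<le> 2 * K * (CARD('x) * (\<Sum>y\<in>UNIV. (min 0 (g y))\<^sup>2))"
    using Cauchy_Schwarz_ineq_sum[of "\<lambda>z. \<bar>min 0 (g z)\<bar>" "\<lambda>_. 1" UNIV] lipschitz_const_nonneg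
    by (intro mult_left_mono) (simp_all add: N_def mult.commute)
  finally show ?thesis
    by (simp add: mult.assoc)
qed

lemma dominated_vanishes:
  assumes "\<And>z. 0 \<le> g z" and "\<And>z. 0 \<le> h z" and "\<And>z. h z = 0 \<Longrightarrow> g z = 0"
    and "h y = 0" and "R h y = 0"
  shows "R g y = 0"
proof -
  define l where "l = (\<Sum>z\<in>UNIV. g z / h z)"
  have l_nonneg: "0 \<le> l"
    unfolding l_def using assms(1,2) by (intro sum_nonneg) auto
  have "g z \<le> l * h z" for z
  proof (cases "h z = 0")
    case False
    have "g z / h z \<le> l"
      unfolding l_def using assms(1,2) by (intro member_le_sum) auto
    then show ?thesis using False assms(2)[of z] by (simp add: divide_le_eq)
  qed (use assms(3) in simp)
  then have "R g y \<le> R (\<lambda>z. l * h z) y"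
    by (intro mono_at) (use assms(3,4) in auto)
  also have "\<dots> = 0"
    using homogeneous[OF l_nonneg] assms(5) by simp
  finally show ?thesis
    using nonneg_at[of g y] assms(1,3,4) by simp
qed

lemma bound_on_zero_set:
  assumes "\<And>z. 0 \<le> g z" and "\<And>z. 0 \<le> h z" and "h y = 0" and "R h y = 0"
  shows "R g y \<le> K * (\<Sum>z | h z = 0. g z)"
proof -
  define g' where "g' z = (if h z = 0 then 0 else g z)" for z
  have "R g' y = 0"
    by (rule dominated_vanishes[where h = h]) (use assms in \<open>auto simp: g'_def\<close>)
  moreover have "(\<Sum>z\<in>UNIV. \<bar>g z - g' z\<bar>) = (\<Sum>z | h z = 0. g z)"
    using assms(1) by (simp add: g'_def if_distrib sum.If_cases Int_def)
  ultimately show ?thesis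
    using lipschitz[of g y g'] by simp
qed

lemma quasimonotone_conjugate: "quasimonotone (\<lambda>g y. - R (\<lambda>z. - g z) y) K"
proof
  show "- R (\<lambda>z. - g z) y \<le> - R (\<lambda>z. - h z) y"
    if "\<And>z. g z \<le> h z" and "g y = h y" for g h :: "'x \<Rightarrow> real" and y
    using mono_at[of "\<lambda>z. - h z" "\<lambda>z. - g z" y] that by simp
  show "- R (\<lambda>z. - (c * g z)) y = c * - R (\<lambda>z. - g z) y" if "c \<ge> 0" for c g y
    using homogeneous[OF that, of "\<lambda>z. - g z" y] by simp
  show "\<bar>- R (\<lambda>z. - g z) y - - R (\<lambda>z. - h z) y\<bar> \<le> K * (\<Sum>z\<in>UNIV. \<bar>g z - h z\<bar>)" for g h y
    using lipschitz[of "\<lambda>z. - g z" y "\<lambda>z. - h z"] by (simp add: abs_minus_commute)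
qed (rule lipschitz_const_nonneg)

end

lemma gronwall_exp_mono:
  fixes \<phi> D :: "real \<Rightarrow> real"
  assumes "a \<le> b"
    and deriv: "\<And>t. t \<in> {a..b} \<Longrightarrow> (\<phi> has_real_derivative D t) (at t within {a..b})"
    and bound: "\<And>t. t \<in> {a..b} \<Longrightarrow> C * \<phi> t \<le> D t"
  shows "\<phi> a * exp (- C * a) \<le> \<phi> b * exp (- C * b)"
proof (rule DERIV_nonneg_imp_increasing_open[OF \<open>a \<le> b\<close>])
  fix t assume t: "a < t" "t < b"
  then have "at t within {a..b} = at t"
    by (intro at_within_interior) auto
  then have "(\<phi> has_real_derivative D t) (at t)"
    using deriv[of t] t by simp
  then have "((\<lambda>t. \<phi> t * exp (- C * t)) has_real_derivative (D t - C * \<phi> t) * exp (- C * t)) (at t)"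
    by (auto intro!: derivative_eq_intros simp: algebra_simps)
  moreover have "0 \<le> (D t - C * \<phi> t) * exp (- C * t)"
    using bound[of t] t by simp
  ultimately show "\<exists>y. ((\<lambda>t. \<phi> t * exp (- C * t)) has_real_derivative y) (at t) \<and> 0 \<le> y"
    by blast
next
  have "continuous_on {a..b} \<phi>"
    unfolding continuous_on_eq_continuous_within
    using deriv by (blast intro: DERIV_continuous)
  then show "continuous_on {a..b} (\<lambda>t. \<phi> t * exp (- C * t))"
    by (intro continuous_intros)
qed

corollary gronwall_pos:
  assumes "a \<le> b" and "0 < \<phi> a"
    and "\<And>t. t \<in> {a..b} \<Longrightarrow> (\<phi> has_real_derivative D t) (at t within {a..b})"
    and "\<And>t. t \<in> {a..b} \<Longrightarrow> C * \<phi> t \<le> D t"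
  shows "0 < \<phi> b"
proof -
  have "0 < \<phi> a * exp (- C * a)" using assms(2) by simp
  also have "\<dots> \<le> \<phi> b * exp (- C * b)" by (rule gronwall_exp_mono) (use assms in auto)
  finally show ?thesis by (simp add: zero_less_mult_iff)
qed

corollary gronwall_nonpos:
  assumes "a \<le> b" and "\<phi> a \<le> 0"
    and "\<And>t. t \<in> {a..b} \<Longrightarrow> (\<phi> has_real_derivative D t) (at t within {a..b})"
    and "\<And>t. t \<in> {a..b} \<Longrightarrow> D t \<le> C * \<phi> t"
  shows "\<phi> b \<le> 0"
proof -
  have "0 \<le> - \<phi> a * exp (- C * a)"
    using assms(2) by (simp add: mult_nonpos_nonneg)
  also have "\<dots> \<le> - \<phi> b * exp (- C * b)"
    by (rule gronwall_exp_mono[where D = "\<lambda>t. - D t"]) (use assms in \<open>auto intro: DERIV_minus\<close>)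
  finally show ?thesis by (simp add: mult_le_0_iff)
qed

lemma min_zero_square_has_derivative:
  "((\<lambda>x. (min 0 x)\<^sup>2) has_real_derivative 2 * min 0 x) (at x)"
proof -
  consider "x < 0" | "x > 0" | "x = 0" by linarith
  then show ?thesis
  proof cases
    case 1
    have "((\<lambda>y. y\<^sup>2) has_real_derivative 2 * min 0 x) (at x)"
      using 1 by (auto intro!: derivative_eq_intros)
    then show ?thesis
      by (rule has_field_derivative_transform_within_open[where S = "{..<0}"]) (use 1 in auto)
  next
    case 2
    have "((\<lambda>y. 0) has_real_derivative 2 * min 0 x) (at x)"
      using 2 by simp
    then show ?thesis
      by (rule has_field_derivative_transform_within_open[where S = "{0<..}"]) (use 2 in auto)
  next
    case 3
    have "((\<lambda>y. (min 0 y)\<^sup>2 / y) \<longlongrightarrow> 0) (at (0::real))"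
    proof (rule Lim_null_comparison)
      show "\<forall>\<^sub>F y in at 0. norm ((min 0 y)\<^sup>2 / y) \<le> \<bar>y\<bar>"
        by (auto simp: power2_eq_square abs_mult min_def divide_simps intro!: always_eventually)
      show "((\<lambda>y::real. \<bar>y\<bar>) \<longlongrightarrow> 0) (at 0)"
        using tendsto_rabs[OF tendsto_ident_at[of 0 UNIV]] by simp
    qed
    then show ?thesis
      using 3 by (simp add: has_field_derivative_iff)
  qed
qed

locale quasimonotone_flow = quasimonotone R K
  for R :: "('x::finite \<Rightarrow> real) \<Rightarrow> ('x \<Rightarrow> real)" and K :: real +
  fixes u :: "real \<Rightarrow> 'x \<Rightarrow> real"
  assumes flow: "t \<ge> 0 \<Longrightarrow> ((\<lambda>s. u s y) has_real_derivative R (u t) y) (at t within {0..})"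
    and initial_nonneg: "0 \<le> u 0 y"
begin

lemma flow_on:
  assumes "0 \<le> a" and "t \<in> {a..b}"
  shows "((\<lambda>s. u s y) has_real_derivative R (u t) y) (at t within {a..b})"
  using flow[of t y] assms by (auto intro: has_field_derivative_subset)

lemma flow_at:
  assumes "0 < t"
  shows "((\<lambda>s. u s y) has_real_derivative R (u t) y) (at t)"
proof -
  have "at t within {0..} = at t"
    using assms by (intro at_within_interior) auto
  then show ?thesis using flow[of t y] assms by simp
qed

lemma flow_nonneg:
  assumes "0 \<le> t"
  shows "0 \<le> u t y"
proof -
  define \<phi> where "\<phi> r = (\<Sum>y\<in>UNIV. (min 0 (u r y))\<^sup>2)" for r
  have "\<phi> t \<le> 0"
  proof (rule gronwall_nonpos[of 0 t \<phi> _ "2 * K * CARD('x)"])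
    show "\<phi> 0 \<le> 0"
      using initial_nonneg by (simp add: \<phi>_def)
    show "(\<phi> has_real_derivative (\<Sum>y\<in>UNIV. 2 * min 0 (u r y) * R (u r) y)) (at r within {0..t})"
      if "r \<in> {0..t}" for r
      unfolding \<phi>_def
      by (intro DERIV_sum DERIV_chain2[OF min_zero_square_has_derivative] flow_on that) simp
  qed (use assms negative_part_dissipation in \<open>simp_all add: \<phi>_def\<close>)
  moreover have "(min 0 (u t y))\<^sup>2 \<le> \<phi> t"
    unfolding \<phi>_def by (rule member_le_sum) auto
  ultimately have "(min 0 (u t y))\<^sup>2 \<le> 0"
    by linarith
  then show ?thesis
    by (simp add: min_def split: if_splits)
qed

lemma flow_pos_forward:
  assumes "0 \<le> a" and "a \<le> b" and "0 < u a y"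
  shows "0 < u b y"
proof (rule gronwall_pos[where \<phi> = "\<lambda>r. u r y" and C = "R (indicator {y}) y"])
  show "R (indicator {y}) y * u r y \<le> R (u r) y" if "r \<in> {a..b}" for r
    using diagonal_bound[of "u r" y] flow_nonneg that assms(1) by (simp add: mult.commute)
qed (use assms flow_on in auto)

lemma flow_pos_backward:
  assumes "0 < s" and "s \<le> t" and "0 < u t x"
  shows "0 < u s x"
proof (rule ccontr)
  assume "\<not> 0 < u s x"
  then have "u s x = 0"
    using flow_nonneg[of s x] assms(1) by simp
  define B where "B = {y. u s y = 0}"
  \<comment> \<open>each \<open>y \<in> B\<close> is an interior minimum of \<open>u \<cdot> y\<close> at time \<open>s\<close>\<close>
  have rate_zero: "R (u s) y = 0" if "y \<in> B" for y
  proof (rule DERIV_local_min[OF flow_at[OF assms(1)] assms(1)], intro allI impI)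
    fix r assume "\<bar>s - r\<bar> < s"
    then show "u s y \<le> u r y"
      using flow_nonneg[of r y] that by (simp add: B_def)
  qed
  define \<phi> where "\<phi> r = (\<Sum>y\<in>B. u r y)" for r
  have "\<phi> t \<le> 0"
  proof (rule gronwall_nonpos[of s t \<phi> "\<lambda>r. \<Sum>y\<in>B. R (u r) y" "real (card B) * K"])
    show "\<phi> s \<le> 0" by (simp add: \<phi>_def B_def)
    show "(\<phi> has_real_derivative (\<Sum>y\<in>B. R (u r) y)) (at r within {s..t})"
      if "r \<in> {s..t}" for r
      unfolding \<phi>_def by (intro DERIV_sum flow_on that) (use assms in simp)
    show "(\<Sum>y\<in>B. R (u r) y) \<le> real (card B) * K * \<phi> r" if "r \<in> {s..t}" for r
    proof -
      have "R (u r) y \<le> K * \<phi> r" if "y \<in> B" for y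
        using bound_on_zero_set[of "u r" "u s" y] flow_nonneg rate_zero[OF that] that
          \<open>r \<in> {s..t}\<close> assms(1) by (simp add: \<phi>_def B_def)
      then have "(\<Sum>y\<in>B. R (u r) y) \<le> (\<Sum>y\<in>B. K * \<phi> r)"
        by (rule sum_mono)
      then show ?thesis by simp
    qed
  qed (use assms in simp)
  moreover have "u t x \<le> \<phi> t"
    unfolding \<phi>_def using \<open>u s x = 0\<close> flow_nonneg assms
    by (intro member_le_sum) (auto simp: B_def)
  ultimately show False
    using assms(3) by simp
qed

lemma flow_positivity:
  assumes "0 < t" and "0 < s"
  shows "(0 < u 0 x \<longrightarrow> 0 < u t x) \<and> (0 < u t x \<longleftrightarrow> 0 < u s x)"
proof -
  have "0 < u a x \<longleftrightarrow> 0 < u b x" if "0 < a" "a \<le> b" for a b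
    using flow_pos_forward[of a b x] flow_pos_backward[of a b x] that by auto
  then show ?thesis
    using flow_pos_forward[of 0 t x] assms by (metis less_imp_le nle_le)
qed

end

locale lower_rate_operator =
  fixes Q :: "('x::finite \<Rightarrow> real) \<Rightarrow> ('x \<Rightarrow> real)"
  assumes lower_rate: "lower_transition_rate_operator Q"
begin

lemma constant_zero: "Q (\<lambda>_. \<mu>) y = 0"
  using lower_rate unfolding lower_transition_rate_operator_def by simp

lemma superadditive: "Q g y + Q h y \<le> Q (\<lambda>z. g z + h z) y"
  using lower_rate unfolding lower_transition_rate_operator_def by blast

lemma homogeneous: "c \<ge> 0 \<Longrightarrow> Q (\<lambda>z. c * g z) y = c * Q g y"
  using lower_rate unfolding lower_transition_rate_operator_def by simp

lemma off_diagonal_nonneg: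
  assumes "x \<noteq> y"
  shows "0 \<le> Q (indicator {y}) x"
proof -
  have "indicator {y} = (\<lambda>z. if z = y then 1 else 0 :: real)"
    by (auto simp: indicator_def)
  then show ?thesis
    using lower_rate assms unfolding lower_transition_rate_operator_def by metis
qed

lemma translation_invariant: "Q (\<lambda>z. g z + \<mu>) = Q g"
proof
  fix y
  have "Q g y + Q (\<lambda>_. \<mu>) y \<le> Q (\<lambda>z. g z + \<mu>) y"
    by (rule superadditive)
  moreover have "Q (\<lambda>z. g z + \<mu>) y + Q (\<lambda>_. - \<mu>) y \<le> Q (\<lambda>z. (g z + \<mu>) + - \<mu>) y"
    by (rule superadditive)
  ultimately show "Q (\<lambda>z. g z + \<mu>) y = Q g y"
    by (simp add: constant_zero)
qed

lemma superadditive_sum: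
  "finite S \<Longrightarrow> (\<Sum>i\<in>S. Q (g i) y) \<le> Q (\<lambda>z. \<Sum>i\<in>S. g i z) y"
proof (induction S rule: finite_induct)
  case (insert i S)
  then show ?case
    using superadditive[of "g i" y "\<lambda>z. \<Sum>i\<in>S. g i z"] by simp
qed (simp add: constant_zero)

lemma expansion_lower_bound:
  assumes "\<And>z. 0 \<le> g z"
  shows "(\<Sum>z\<in>UNIV. g z * Q (indicator {z}) y) \<le> Q g y"
proof -
  have "(\<Sum>z\<in>UNIV. g z * Q (indicator {z}) y) = (\<Sum>z\<in>UNIV. Q (\<lambda>w. g z * indicator {z} w) y)"
    using homogeneous assms by simp
  also have "\<dots> \<le> Q (\<lambda>w. \<Sum>z\<in>UNIV. g z * indicator {z} w) y"
    by (rule superadditive_sum) simp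
  also have "(\<lambda>w. \<Sum>z\<in>UNIV. g z * indicator {z} w) = g"
    by (simp add: indicator_def)
  finally show ?thesis .
qed

lemma sum_ge_diagonal_term:
  assumes "\<And>z. 0 \<le> g z"
  shows "g y * Q (indicator {y}) y \<le> (\<Sum>z\<in>UNIV. g z * Q (indicator {z}) y)"
proof -
  have "0 \<le> (\<Sum>z\<in>UNIV - {y}. g z * Q (indicator {z}) y)"
    using assms off_diagonal_nonneg by (intro sum_nonneg) auto
  then show ?thesis
    by (simp add: sum.remove[of UNIV y])
qed

definition lipschitz_constant :: real
  where "lipschitz_constant = 2 * (\<Sum>y\<in>UNIV. \<bar>Q (indicator {y}) y\<bar>)"

lemma lower_bound: "- lipschitz_constant * (\<Sum>z\<in>UNIV. \<bar>g z\<bar>) \<le> Q g y"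
proof -
  define n where "n = (\<Sum>z\<in>UNIV. \<bar>g z\<bar>)"
  define q where "q = Q (indicator {y}) y"
  have g_le: "\<bar>g z\<bar> \<le> n" for z
    unfolding n_def by (rule member_le_sum) auto
  have shifted_nonneg: "0 \<le> g z + n" for z
    using g_le[of z] by (simp add: abs_le_iff)
  have "2 * \<bar>q\<bar> \<le> lipschitz_constant"
    unfolding lipschitz_constant_def q_def by (auto intro: member_le_sum)
  then have "- lipschitz_constant * n \<le> (2 * n) * - \<bar>q\<bar>"
    using mult_right_mono[of "2 * \<bar>q\<bar>" lipschitz_constant n] shifted_nonneg[of y] g_le[of y]
    by (simp add: mult_ac)
  also have "\<dots> \<le> (g y + n) * - \<bar>q\<bar>"
    using g_le[of y] by (intro mult_right_mono_neg) (auto simp: abs_le_iff)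
  also have "\<dots> \<le> (g y + n) * q"
    using shifted_nonneg[of y] by (intro mult_left_mono) auto
  also have "\<dots> \<le> Q (\<lambda>z. g z + n) y"
    using sum_ge_diagonal_term[of "\<lambda>z. g z + n" y] expansion_lower_bound[of "\<lambda>z. g z + n" y]
      shifted_nonneg by (simp add: q_def)
  also have "\<dots> = Q g y"
    by (simp add: translation_invariant)
  finally show ?thesis
    by (simp add: n_def)
qed

lemma quasimonotone: "quasimonotone Q lipschitz_constant"
proof
  show "Q g y \<le> Q h y" if "\<And>z. g z \<le> h z" and "g y = h y" for g h :: "'x \<Rightarrow> real" and y
  proof -
    have "0 \<le> (h z - g z) * Q (indicator {z}) y" for z
      using that off_diagonal_nonneg[of y z] by (cases "z = y") auto
    then have "0 \<le> (\<Sum>z\<in>UNIV. (h z - g z) * Q (indicator {z}) y)"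
      by (rule sum_nonneg)
    also have "\<dots> \<le> Q (\<lambda>z. h z - g z) y"
      by (rule expansion_lower_bound) (use that in simp)
    finally show ?thesis
      using superadditive[of g y "\<lambda>z. h z - g z"] by simp
  qed
  show "\<bar>Q g y - Q h y\<bar> \<le> lipschitz_constant * (\<Sum>z\<in>UNIV. \<bar>g z - h z\<bar>)" for g h y
    using superadditive[of g y "\<lambda>z. h z - g z"] superadditive[of h y "\<lambda>z. g z - h z"]
      lower_bound[of "\<lambda>z. h z - g z" y] lower_bound[of "\<lambda>z. g z - h z" y]
    by (simp add: abs_minus_commute abs_le_iff)
  show "0 \<le> lipschitz_constant"
    unfolding lipschitz_constant_def by (simp add: sum_nonneg)
qed (rule homogeneous)

end

lemma lower_semigroup_initial: "lower_semigroup_of Q T \<Longrightarrow> T 0 f = f"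
  by (simp add: lower_semigroup_of_def)

lemma lower_semigroup_has_derivative:
  "lower_semigroup_of Q T \<Longrightarrow> 0 \<le> t \<Longrightarrow>
    ((\<lambda>s. T s f x) has_real_derivative Q (T t f) x) (at t within {0..})"
  by (simp add: lower_semigroup_of_def)

lemma lower_semigroup_above:
  fixes Q :: "('x::finite \<Rightarrow> real) \<Rightarrow> ('x \<Rightarrow> real)"
  assumes "lower_transition_rate_operator Q" and "lower_semigroup_of Q T"
    and "\<And>y. c \<le> f y" and "0 < t" and "0 < s"
  shows "(c < f x \<longrightarrow> c < T t f x) \<and> (c < T t f x \<longleftrightarrow> c < T s f x)"
proof -
  interpret lower_rate_operator Q by (rule lower_rate_operator.intro) fact
  interpret quasimonotone_flow Q lipschitz_constant "\<lambda>r y. T r f y - c"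
  proof (rule quasimonotone_flow.intro[OF quasimonotone], unfold_locales)
    fix r :: real and y :: 'x
    assume "0 \<le> r"
    then have "((\<lambda>r. T r f y - c) has_real_derivative Q (T r f) y - 0) (at r within {0..})"
      by (intro DERIV_diff DERIV_const lower_semigroup_has_derivative[OF assms(2)])
    moreover have "Q (T r f) = Q (\<lambda>z. T r f z - c)"
      using translation_invariant[of "\<lambda>z. T r f z - c" c] by simp
    ultimately show "((\<lambda>r. T r f y - c) has_real_derivative Q (\<lambda>z. T r f z - c) y) (at r within {0..})"
      by simp
  next
    show "0 \<le> T 0 f y - c" for y
      using assms(3) by (simp add: lower_semigroup_initial[OF assms(2)])
  qed
  show ?thesis
    using flow_positivity[OF assms(4,5), of x] unfolding lower_semigroup_initial[OF assms(2)]
    by argo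
qed

lemma lower_semigroup_below:
  fixes Q :: "('x::finite \<Rightarrow> real) \<Rightarrow> ('x \<Rightarrow> real)"
  assumes "lower_transition_rate_operator Q" and "lower_semigroup_of Q T"
    and "\<And>y. f y \<le> c" and "0 < t" and "0 < s"
  shows "(f x < c \<longrightarrow> T t f x < c) \<and> (T t f x < c \<longleftrightarrow> T s f x < c)"
proof -
  interpret lower_rate_operator Q by (rule lower_rate_operator.intro) fact
  interpret quasimonotone_flow "\<lambda>g y. - Q (\<lambda>z. - g z) y" lipschitz_constant "\<lambda>r y. c - T r f y"
  proof (rule quasimonotone_flow.intro[OF quasimonotone.quasimonotone_conjugate[OF quasimonotone]],
      unfold_locales)
    fix r :: real and y :: 'x
    assume "0 \<le> r"
    then have "((\<lambda>r. c - T r f y) has_real_derivative 0 - Q (T r f) y) (at r within {0..})"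
      by (intro DERIV_diff DERIV_const lower_semigroup_has_derivative[OF assms(2)])
    moreover have "Q (T r f) = Q (\<lambda>z. - (c - T r f z))"
      using translation_invariant[of "\<lambda>z. - (c - T r f z)" c] by simp
    ultimately show "((\<lambda>r. c - T r f y) has_real_derivative - Q (\<lambda>z. - (c - T r f z)) y)
        (at r within {0..})"
      by simp
  next
    show "0 \<le> c - T 0 f y" for y
      using assms(3) by (simp add: lower_semigroup_initial[OF assms(2)])
  qed
  show ?thesis
    using flow_positivity[OF assms(4,5), of x] unfolding lower_semigroup_initial[OF assms(2)]
    by argo
qed

theorem proposition13:
  fixes Q :: "('x::finite \<Rightarrow> real) \<Rightarrow> ('x \<Rightarrow> real)"
    and T :: "real \<Rightarrow> ('x \<Rightarrow> real) \<Rightarrow> ('x \<Rightarrow> real)"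
    and f :: "'x \<Rightarrow> real" and x :: 'x and t s :: real
  assumes "lower_transition_rate_operator Q"
    and "lower_semigroup_of Q T"
    and "t > 0" and "s > 0"
  shows "((f x > Min (range f) \<longrightarrow> T t f x > Min (range f)) \<and>
         (T t f x > Min (range f) \<longleftrightarrow> T s f x > Min (range f))) \<and>
         ((f x < Max (range f) \<longrightarrow> T t f x < Max (range f)) \<and>
         (T t f x < Max (range f) \<longleftrightarrow> T s f x < Max (range f))) \<and>
         ((f x > Min (range f) \<longrightarrow> upper_of T t f x > Min (range f)) \<and>
         (upper_of T t f x > Min (range f) \<longleftrightarrow> upper_of T s f x > Min (range f))) \<and>
         ((f x < Max (range f) \<longrightarrow> upper_of T t f x < Max (range f)) \<and>
         (upper_of T t f x < Max (range f) \<longleftrightarrow> upper_of T s f x < Max (range f)))"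
proof -
  let ?m = "Min (range f)" and ?M = "Max (range f)"
  have min_le: "?m \<le> f y" and max_ge: "f y \<le> ?M" for y
    by auto
  then have neg_min_ge: "- f y \<le> - ?m" and neg_max_le: "- ?M \<le> - f y" for y
    by simp_all
  have upper: "upper_of T r f x = - T r (\<lambda>y. - f y) x" for r
    by (simp add: upper_of_def)
  note above = lower_semigroup_above[OF assms(1,2) _ assms(3,4)]
  note below = lower_semigroup_below[OF assms(1,2) _ assms(3,4)]
  show ?thesis
    using above[where c = ?m and f = f and x = x, OF min_le]
      below[where c = ?M and f = f and x = x, OF max_ge]
      below[where c = "- ?m" and f = "\<lambda>y. - f y" and x = x, OF neg_min_ge]
      above[where c = "- ?M" and f = "\<lambda>y. - f y" and x = x, OF neg_max_le]
    unfolding upper by argo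
qed

end
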